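(* Let $\lambda=(\lambda_1,\dots,\lambda_r)$ be a partition of $n$. Identify $\mathbb{C}[E_\lambda]$ with $\mathbb{C}[y_1,\dots,y_r]$, where $y_1$ is the common value of $x_i$ for $1\le i\le\lambda_1$, $y_2$ the common value of $x_i$ for $\lambda_1<i\le\lambda_1+\lambda_2$, etc. Then the pullback along the (surjective) composite map $E_\lambda\to X_\lambda\to X_\lambda/S_n$ identifies $\mathcal{O}(X_\lambda/S_n)$ with the subalgebra of $\mathbb{C}[y_1,\dots,y_r]$ generated by the Newton $\lambda$-sums $P_{i,\lambda}(y_1,\dots,y_r)=\lambda_1y_1^i+\cdots+\lambda_ry_r^i$, $i=1,2,\dots$
   Context: Work over $\mathbb{C}$. $E_\lambda\subset\mathbb{C}^n$ is the subspace defined by $x_1=\cdots=x_{\lambda_1}$, $x_{\lambda_1+1}=\cdots=x_{\lambda_1+\lambda_2}$, ..., $x_{n-\lambda_r+1}=\cdots=x_n$; $X_\lambda=S_n\cdot E_\lambda$ is the union of its $S_n$-translates, and $\mathcal{O}(X_\lambda/S_n)=\mathcal{O}(X_\lambda)^{S_n}$. *)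

theory Defs
  imports Complex_Main "HOL-Combinatorics.Permutations"
begin

text \<open>Points of C^n are functions nat => complex; only coordinates 0..n-1 matter
  (the paper's x_1..x_n are our x 0 .. x (n-1)). Similarly points of C^r.\<close>

inductive_set poly_fun :: "nat \<Rightarrow> ((nat \<Rightarrow> complex) \<Rightarrow> complex) set" for n :: nat where
  pf_const: "(\<lambda>x. c) \<in> poly_fun n"
| pf_var: "i < n \<Longrightarrow> (\<lambda>x. x i) \<in> poly_fun n"
| pf_add: "f \<in> poly_fun n \<Longrightarrow> g \<in> poly_fun n \<Longrightarrow> (\<lambda>x. f x + g x) \<in> poly_fun n"
| pf_mult: "f \<in> poly_fun n \<Longrightarrow> g \<in> poly_fun n \<Longrightarrow> (\<lambda>x. f x * g x) \<in> poly_fun n"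

definition is_partition :: "nat list \<Rightarrow> nat \<Rightarrow> bool" where
  "is_partition lam n \<longleftrightarrow> (\<forall>k\<in>set lam. 0 < k) \<and> sorted_wrt (\<ge>) lam \<and> sum_list lam = n"

definition blk :: "nat list \<Rightarrow> nat \<Rightarrow> nat" where
  "blk lam i = (LEAST j. i < sum_list (take (Suc j) lam))"

definition E_lam :: "nat \<Rightarrow> nat list \<Rightarrow> (nat \<Rightarrow> complex) set" where
  "E_lam n lam = {x. (\<forall>i\<ge>n. x i = 0) \<and>
     (\<forall>i<n. \<forall>j<n. blk lam i = blk lam j \<longrightarrow> x i = x j)}"

definition X_lam :: "nat \<Rightarrow> nat list \<Rightarrow> (nat \<Rightarrow> complex) set" where
  "X_lam n lam = {x \<circ> \<sigma> | x \<sigma>. x \<in> E_lam n lam \<and> \<sigma> permutes {..<n}}"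

definition Sn_invariant_on :: "nat \<Rightarrow> (nat \<Rightarrow> complex) set \<Rightarrow> ((nat \<Rightarrow> complex) \<Rightarrow> complex) \<Rightarrow> bool" where
  "Sn_invariant_on n X f \<longleftrightarrow> (\<forall>\<sigma>. \<sigma> permutes {..<n} \<longrightarrow> (\<forall>x\<in>X. f (x \<circ> \<sigma>) = f x))"

definition emb :: "nat list \<Rightarrow> (nat \<Rightarrow> complex) \<Rightarrow> (nat \<Rightarrow> complex)" where
  "emb lam y = (\<lambda>i. if i < sum_list lam then y (blk lam i) else 0)"

definition newton_lam :: "nat list \<Rightarrow> nat \<Rightarrow> (nat \<Rightarrow> complex) \<Rightarrow> complex" where
  "newton_lam lam i y = (\<Sum>j<length lam. of_nat (lam ! j) * y j ^ i)"

inductive_set newton_alg :: "nat list \<Rightarrow> ((nat \<Rightarrow> complex) \<Rightarrow> complex) set" for lam :: "nat list" where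
  na_const: "(\<lambda>y. c) \<in> newton_alg lam"
| na_gen: "1 \<le> i \<Longrightarrow> newton_lam lam i \<in> newton_alg lam"
| na_add: "f \<in> newton_alg lam \<Longrightarrow> g \<in> newton_alg lam \<Longrightarrow> (\<lambda>y. f y + g y) \<in> newton_alg lam"
| na_mult: "f \<in> newton_alg lam \<Longrightarrow> g \<in> newton_alg lam \<Longrightarrow> (\<lambda>y. f y * g y) \<in> newton_alg lam"

end

theory Submission imports Defs begin

text \<open>Every point of \<open>X_lam\<close> is an \<open>S_n\<close>-translate of a point of \<open>E_lam = emb lam ` C^r\<close>, so
  invariant functions on \<open>X_lam\<close> are determined by their pullbacks along \<open>emb lam\<close>. An invariant
  polynomial agrees on \<open>X_lam\<close> with its symmetrisation, which by the fundamental theorem on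
  symmetric polynomials in characteristic 0 is a polynomial in the power sums
  \<open>x_1^i + \<dots> + x_n^i\<close>; and these pull back exactly to the Newton \<open>lam\<close>-sums.
  The symmetric-polynomial theorem is proved by induction on \<open>n\<close>: expand in powers of the last
  variable, symmetrise the coefficients over \<open>S_(n-1)\<close> and apply the induction hypothesis, then
  eliminate the last variable by averaging over the transpositions exchanging it with the others.\<close>

inductive_set gen_alg :: "('a \<Rightarrow> complex) set \<Rightarrow> ('a \<Rightarrow> complex) set" for G where
  gen_alg_const: "(\<lambda>x. c) \<in> gen_alg G"
| gen_alg_gen: "g \<in> G \<Longrightarrow> g \<in> gen_alg G"
| gen_alg_add: "f \<in> gen_alg G \<Longrightarrow> g \<in> gen_alg G \<Longrightarrow> (\<lambda>x. f x + g x) \<in> gen_alg G"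
| gen_alg_mult: "f \<in> gen_alg G \<Longrightarrow> g \<in> gen_alg G \<Longrightarrow> (\<lambda>x. f x * g x) \<in> gen_alg G"

lemma gen_alg_comp:
  assumes "h \<in> gen_alg G" "\<And>g. g \<in> G \<Longrightarrow> (\<lambda>x. g (\<phi> x)) \<in> gen_alg H"
  shows "(\<lambda>x. h (\<phi> x)) \<in> gen_alg H"
  using assms(1) by induction (auto intro: gen_alg.intros assms(2))

lemma gen_alg_trans:
  assumes "h \<in> gen_alg G" "\<And>g. g \<in> G \<Longrightarrow> g \<in> gen_alg H"
  shows "h \<in> gen_alg H"
  using gen_alg_comp[of h G id H] assms by simp

lemma gen_alg_mono: "G \<subseteq> H \<Longrightarrow> h \<in> gen_alg G \<Longrightarrow> h \<in> gen_alg H"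
  using gen_alg_trans[of h G H] by (auto intro: gen_alg_gen)

lemma gen_alg_scale: "h \<in> gen_alg G \<Longrightarrow> (\<lambda>x. c * h x) \<in> gen_alg G"
  by (rule gen_alg_mult[OF gen_alg_const])

lemma gen_alg_diff: "f \<in> gen_alg G \<Longrightarrow> g \<in> gen_alg G \<Longrightarrow> (\<lambda>x. f x - g x) \<in> gen_alg G"
  using gen_alg_add[OF _ gen_alg_scale[of g G "-1"], of f] by simp

lemma gen_alg_divide: "h \<in> gen_alg G \<Longrightarrow> (\<lambda>x. h x / c) \<in> gen_alg G"
  using gen_alg_scale[of h G "1/c"] by simp

lemma gen_alg_power: "h \<in> gen_alg G \<Longrightarrow> (\<lambda>x. h x ^ k) \<in> gen_alg G"
  by (induction k) (auto intro: gen_alg.intros)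

lemma gen_alg_sum:
  "finite A \<Longrightarrow> (\<And>a. a \<in> A \<Longrightarrow> f a \<in> gen_alg G) \<Longrightarrow> (\<lambda>x. \<Sum>a\<in>A. f a x) \<in> gen_alg G"
  by (induction A rule: finite_induct) (auto intro: gen_alg.intros)

lemma gen_alg_invariant:
  assumes "h \<in> gen_alg G" "\<And>g x. g \<in> G \<Longrightarrow> g (\<phi> x) = g x"
  shows "h (\<phi> x) = h x"
  using assms(1) by induction (auto simp: assms(2))

definition polys_over :: "('a \<Rightarrow> complex) set \<Rightarrow> ('a \<Rightarrow> complex) \<Rightarrow> ('a \<Rightarrow> complex) set" where
  "polys_over Q v =
     {h. \<exists>D a. (\<forall>k. a k \<in> gen_alg Q) \<and> (\<forall>x. h x = (\<Sum>k\<le>D. a k x * v x ^ k))}"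

lemma sum_atMost_truncate:
  assumes "D' \<le> D"
  shows "(\<Sum>k\<le>D. (if k \<le> D' then a k else 0) * (w :: 'a :: comm_semiring_1) ^ k)
       = (\<Sum>k\<le>D'. a k * w ^ k)"
proof -
  have "(\<Sum>k\<le>D. (if k \<le> D' then a k else 0) * w ^ k) = (\<Sum>k\<in>{..D} \<inter> {k. k \<le> D'}. a k * w ^ k)"
    by (subst sum.inter_restrict) (auto intro: sum.cong)
  also have "{..D} \<inter> {k. k \<le> D'} = {..D'}" using assms by auto
  finally show ?thesis .
qed

lemma polys_over_add:
  assumes "f \<in> polys_over Q v" "g \<in> polys_over Q v"
  shows "(\<lambda>x. f x + g x) \<in> polys_over Q v"
proof -
  obtain D1 a where a: "\<forall>k. a k \<in> gen_alg Q" "\<forall>x. f x = (\<Sum>k\<le>D1. a k x * v x ^ k)"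
    using assms(1) unfolding polys_over_def by blast
  obtain D2 b where b: "\<forall>k. b k \<in> gen_alg Q" "\<forall>x. g x = (\<Sum>k\<le>D2. b k x * v x ^ k)"
    using assms(2) unfolding polys_over_def by blast
  have truncate: "(\<lambda>x. if k \<le> D then e k x else 0) \<in> gen_alg Q" if "\<forall>k. e k \<in> gen_alg Q" for e D k
    using that by (cases "k \<le> D") (auto intro: gen_alg_const)
  define c where "c k x = (if k \<le> D1 then a k x else 0) + (if k \<le> D2 then b k x else 0)" for k x
  have "\<forall>k. c k \<in> gen_alg Q"
    unfolding c_def using a(1) b(1) by (auto intro!: gen_alg_add truncate)
  moreover have "\<forall>x. f x + g x = (\<Sum>k\<le>D1 + D2. c k x * v x ^ k)"
    unfolding c_def distrib_right sum.distrib
    by (simp add: a(2) b(2) sum_atMost_truncate[of D1 "D1 + D2"] sum_atMost_truncate[of D2 "D1 + D2"])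
  ultimately show ?thesis unfolding polys_over_def by blast
qed

lemma gen_alg_imp_polys_over: "h \<in> gen_alg Q \<Longrightarrow> h \<in> polys_over Q v"
  unfolding polys_over_def by (intro CollectI exI[of _ 0] exI[of _ "\<lambda>_. h"]) simp

lemma polys_over_var: "v \<in> polys_over Q v"
  unfolding polys_over_def
  by (intro CollectI exI[of _ 1] exI[of _ "\<lambda>k _. if k = 1 then 1 else 0"]) (auto intro: gen_alg_const)

lemma polys_over_mult_var:
  assumes "h \<in> polys_over Q v"
  shows "(\<lambda>x. v x * h x) \<in> polys_over Q v"
proof -
  obtain D a where a: "\<forall>k. a k \<in> gen_alg Q" "\<forall>x. h x = (\<Sum>k\<le>D. a k x * v x ^ k)"
    using assms unfolding polys_over_def by blast
  define c where "c k = (case k of 0 \<Rightarrow> (\<lambda>_. 0) | Suc j \<Rightarrow> a j)" for k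
  have "\<forall>k. c k \<in> gen_alg Q"
    unfolding c_def using a(1) by (auto intro: gen_alg_const split: nat.split)
  moreover have "\<forall>x. v x * h x = (\<Sum>k\<le>Suc D. c k x * v x ^ k)"
    unfolding sum.atMost_Suc_shift by (simp add: c_def a(2) sum_distrib_left algebra_simps)
  ultimately show ?thesis unfolding polys_over_def by blast
qed

lemma polys_over_scale:
  assumes "h \<in> polys_over Q v" "b \<in> gen_alg Q"
  shows "(\<lambda>x. b x * h x) \<in> polys_over Q v"
proof -
  obtain D a where a: "\<forall>k. a k \<in> gen_alg Q" "\<forall>x. h x = (\<Sum>k\<le>D. a k x * v x ^ k)"
    using assms unfolding polys_over_def by blast
  have "\<forall>k. (\<lambda>x. b x * a k x) \<in> gen_alg Q" using a(1) assms(2) by (auto intro: gen_alg_mult)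
  moreover have "\<forall>x. b x * h x = (\<Sum>k\<le>D. b x * a k x * v x ^ k)"
    by (simp add: a(2) sum_distrib_left algebra_simps)
  ultimately show ?thesis unfolding polys_over_def
    by (intro CollectI exI[of _ D] exI[of _ "\<lambda>k x. b x * a k x"]) simp
qed

lemma polys_over_sum:
  "finite A \<Longrightarrow> (\<And>i. i \<in> A \<Longrightarrow> f i \<in> polys_over Q v) \<Longrightarrow> (\<lambda>x. \<Sum>i\<in>A. f i x) \<in> polys_over Q v"
  by (induction A rule: finite_induct)
     (auto intro: polys_over_add gen_alg_imp_polys_over gen_alg_const)

lemma polys_over_mult_var_power:
  "h \<in> polys_over Q v \<Longrightarrow> (\<lambda>x. v x ^ k * h x) \<in> polys_over Q v"
  by (induction k) (auto simp: mult.assoc dest: polys_over_mult_var)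

lemma polys_over_mult:
  assumes "f \<in> polys_over Q v" "g \<in> polys_over Q v"
  shows "(\<lambda>x. f x * g x) \<in> polys_over Q v"
proof -
  obtain D a where a: "\<forall>k. a k \<in> gen_alg Q" "\<forall>x. f x = (\<Sum>k\<le>D. a k x * v x ^ k)"
    using assms(1) unfolding polys_over_def by blast
  have "(\<lambda>x. \<Sum>k\<le>D. a k x * (v x ^ k * g x)) \<in> polys_over Q v"
    by (intro polys_over_sum polys_over_scale polys_over_mult_var_power assms(2) a(1)[rule_format])
       simp
  moreover have "(\<lambda>x. \<Sum>k\<le>D. a k x * (v x ^ k * g x)) = (\<lambda>x. f x * g x)"
    by (auto simp: a(2) sum_distrib_right sum_distrib_left algebra_simps)
  ultimately show ?thesis by simp
qed

lemma gen_alg_insert_imp_polys_over: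
  "h \<in> gen_alg (insert v Q) \<Longrightarrow> h \<in> polys_over Q v"
  by (induction rule: gen_alg.induct)
     (auto intro: polys_over_add polys_over_mult polys_over_var gen_alg_imp_polys_over
       gen_alg_const gen_alg_gen)

lemma gen_alg_insert_expansion:
  "h \<in> gen_alg (insert v Q) \<Longrightarrow>
    \<exists>D a. (\<forall>k. a k \<in> gen_alg Q) \<and> (\<forall>x. h x = (\<Sum>k\<le>D. a k x * v x ^ k))"
  using gen_alg_insert_imp_polys_over unfolding polys_over_def by blast

definition coord_funs :: "nat \<Rightarrow> ((nat \<Rightarrow> complex) \<Rightarrow> complex) set" where
  "coord_funs n = {(\<lambda>x. x i) | i. i < n}"

definition power_sum :: "nat \<Rightarrow> nat \<Rightarrow> (nat \<Rightarrow> complex) \<Rightarrow> complex" where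
  "power_sum n k = (\<lambda>x. \<Sum>i<n. x i ^ k)"

definition power_sums :: "nat \<Rightarrow> ((nat \<Rightarrow> complex) \<Rightarrow> complex) set" where
  "power_sums n = {power_sum n k | k. 1 \<le> k}"

definition symmetric_on :: "nat \<Rightarrow> ((nat \<Rightarrow> complex) \<Rightarrow> complex) \<Rightarrow> bool" where
  "symmetric_on n f \<longleftrightarrow> (\<forall>\<sigma> x. \<sigma> permutes {..<n} \<longrightarrow> f (x \<circ> \<sigma>) = f x)"

definition symmetrize :: "nat \<Rightarrow> ((nat \<Rightarrow> complex) \<Rightarrow> complex) \<Rightarrow> (nat \<Rightarrow> complex) \<Rightarrow> complex" where
  "symmetrize n h = (\<lambda>x. (\<Sum>\<sigma>\<in>{\<sigma>. \<sigma> permutes {..<n}}. h (x \<circ> \<sigma>)) / fact n)"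

lemma poly_fun_eq_gen_alg_coord_funs: "poly_fun n = gen_alg (coord_funs n)"
proof safe
  fix f assume "f \<in> poly_fun n" then show "f \<in> gen_alg (coord_funs n)"
    by induction (auto intro: gen_alg.intros simp: coord_funs_def)
next
  fix f assume "f \<in> gen_alg (coord_funs n)" then show "f \<in> poly_fun n"
    by induction (auto intro: poly_fun.intros simp: coord_funs_def)
qed

lemma gen_alg_coord_funs_permute:
  assumes "h \<in> gen_alg (coord_funs n)" "\<sigma> permutes {..<n}"
  shows "(\<lambda>x. h (x \<circ> \<sigma>)) \<in> gen_alg (coord_funs n)"
proof (rule gen_alg_comp[OF assms(1)])
  fix g assume "g \<in> coord_funs n"
  then obtain i where "i < n" "g = (\<lambda>x. x i)" unfolding coord_funs_def by blast
  moreover have "\<sigma> i < n" using permutes_in_image[OF assms(2), of i] \<open>i < n\<close> by simp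
  ultimately show "(\<lambda>x. g (x \<circ> \<sigma>)) \<in> gen_alg (coord_funs n)"
    by (auto simp: coord_funs_def intro!: gen_alg_gen)
qed

lemma symmetrize_in_gen_alg:
  "h \<in> gen_alg (coord_funs n) \<Longrightarrow> symmetrize n h \<in> gen_alg (coord_funs n)"
  unfolding symmetrize_def
  by (intro gen_alg_divide gen_alg_sum gen_alg_coord_funs_permute) (auto intro: finite_permutations)

lemma symmetric_on_symmetrize: "symmetric_on n (symmetrize n h)"
proof -
  have "symmetrize n h (x \<circ> \<tau>) = symmetrize n h x" if "\<tau> permutes {..<n}" for x \<tau>
    using setum_permutations_compose_left[OF that, of "\<lambda>\<sigma>. h (x \<circ> \<sigma>)"]
    by (simp add: symmetrize_def o_assoc)
  then show ?thesis unfolding symmetric_on_def by blast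
qed

lemma symmetrize_eq:
  assumes "\<And>\<sigma>. \<sigma> permutes {..<n} \<Longrightarrow> h (x \<circ> \<sigma>) = h x"
  shows "symmetrize n h x = h x"
proof -
  have "(\<Sum>\<sigma>\<in>{\<sigma>. \<sigma> permutes {..<n}}. h (x \<circ> \<sigma>)) = (\<Sum>\<sigma>\<in>{\<sigma>. \<sigma> permutes {..<n}}. h x)"
    using assms by (intro sum.cong) auto
  also have "\<dots> = of_nat (fact n) * h x" using card_permutations[of "{..<n}" n] by simp
  finally show ?thesis unfolding symmetrize_def by simp
qed

lemma symmetrize_expansion_last_coord:
  assumes "\<And>x. f x = (\<Sum>k\<le>D. c k x * x n ^ k)"
  shows "symmetrize n f x = (\<Sum>k\<le>D. symmetrize n (c k) x * x n ^ k)"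
proof -
  have "f (x \<circ> \<sigma>) = (\<Sum>k\<le>D. c k (x \<circ> \<sigma>) * x n ^ k)" if "\<sigma> permutes {..<n}" for \<sigma>
    using assms permutes_not_in[OF that, of n] by simp
  then have "symmetrize n f x
      = (\<Sum>\<sigma>\<in>{\<sigma>. \<sigma> permutes {..<n}}. \<Sum>k\<le>D. c k (x \<circ> \<sigma>) * x n ^ k) / fact n"
    unfolding symmetrize_def by (intro arg_cong[where f="\<lambda>z. z / _"] sum.cong) auto
  also have "\<dots> = (\<Sum>k\<le>D. (\<Sum>\<sigma>\<in>{\<sigma>. \<sigma> permutes {..<n}}. c k (x \<circ> \<sigma>)) * x n ^ k) / fact n"
    by (subst sum.swap) (simp add: sum_distrib_right)
  also have "\<dots> = (\<Sum>k\<le>D. symmetrize n (c k) x * x n ^ k)"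
    unfolding symmetrize_def by (subst sum_divide_distrib) (simp add: field_simps)
  finally show ?thesis .
qed

lemma power_sum_permute: "\<tau> permutes {..<n} \<Longrightarrow> power_sum n k (x \<circ> \<tau>) = power_sum n k x"
  unfolding power_sum_def
  using sum.reindex_bij_betw[OF permutes_imp_bij, of \<tau> "{..<n}" "\<lambda>i. x i ^ k"] by simp

lemma power_sum_in_gen_alg: "power_sum n k \<in> gen_alg (power_sums n)"
proof (cases "k = 0")
  case True
  then have "power_sum n k = (\<lambda>x. of_nat n)" unfolding power_sum_def by auto
  then show ?thesis by (simp add: gen_alg_const)
next
  case False then show ?thesis by (auto simp: power_sums_def intro!: gen_alg_gen)
qed

lemma power_sum_in_coord_funs: "power_sum n k \<in> gen_alg (coord_funs n)"
  unfolding power_sum_def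
  by (intro gen_alg_sum gen_alg_power gen_alg_gen) (auto simp: coord_funs_def)

lemma symmetric_in_gen_alg_last_coord_power_sums:
  assumes IH: "\<And>g. g \<in> gen_alg (coord_funs n) \<Longrightarrow> symmetric_on n g \<Longrightarrow> g \<in> gen_alg (power_sums n)"
    and f: "f \<in> gen_alg (coord_funs (Suc n))" "symmetric_on n f"
  shows "f \<in> gen_alg (insert (\<lambda>x. x n) (power_sums (Suc n)))"
proof -
  let ?H = "insert (\<lambda>x. x n) (power_sums (Suc n))"
  have "coord_funs (Suc n) = insert (\<lambda>x. x n) (coord_funs n)"
    by (auto simp: coord_funs_def less_Suc_eq)
  with f(1) have "f \<in> gen_alg (insert (\<lambda>x. x n) (coord_funs n))" by simp
  then obtain D c where c: "\<And>k. c k \<in> gen_alg (coord_funs n)" "\<And>x. f x = (\<Sum>k\<le>D. c k x * x n ^ k)"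
    using gen_alg_insert_expansion by blast
  have f_eq: "f = (\<lambda>x. \<Sum>k\<le>D. symmetrize n (c k) x * x n ^ k)"
  proof
    fix x
    have "f x = symmetrize n f x"
      using f(2) by (intro symmetrize_eq[symmetric]) (simp add: symmetric_on_def)
    also have "\<dots> = (\<Sum>k\<le>D. symmetrize n (c k) x * x n ^ k)"
      using c(2) by (rule symmetrize_expansion_last_coord)
    finally show "f x = (\<Sum>k\<le>D. symmetrize n (c k) x * x n ^ k)" .
  qed
  have power_sum_H: "power_sum n k \<in> gen_alg ?H" for k
  proof -
    have "power_sum n k = (\<lambda>x. power_sum (Suc n) k x - x n ^ k)" unfolding power_sum_def by auto
    moreover have "power_sum (Suc n) k \<in> gen_alg ?H"
      by (rule gen_alg_mono[OF _ power_sum_in_gen_alg]) blast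
    ultimately show ?thesis by (simp add: gen_alg_diff gen_alg_power gen_alg_gen)
  qed
  have "symmetrize n (c k) \<in> gen_alg ?H" for k
    by (rule gen_alg_trans[OF IH[OF symmetrize_in_gen_alg[OF c(1)] symmetric_on_symmetrize]])
       (use power_sum_H in \<open>auto simp: power_sums_def\<close>)
  then show ?thesis unfolding f_eq
    by (intro gen_alg_sum gen_alg_mult gen_alg_power) (auto intro: gen_alg_gen)
qed

text \<open>Since \<open>f\<close> is invariant under the transpositions \<open>(i n)\<close>, averaging its expansion in
  powers of \<open>x n\<close> over them replaces \<open>x n ^ k\<close> by \<open>power_sum (Suc n) k / (n + 1)\<close>.\<close>

lemma symmetric_gen_alg_eliminate_last_coord:
  assumes f: "f \<in> gen_alg (insert (\<lambda>x. x n) (power_sums (Suc n)))" "symmetric_on (Suc n) f"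
  shows "f \<in> gen_alg (power_sums (Suc n))"
proof -
  obtain E a where a: "\<And>k. a k \<in> gen_alg (power_sums (Suc n))"
      "\<And>x. f x = (\<Sum>k\<le>E. a k x * x n ^ k)"
    using gen_alg_insert_expansion[OF f(1)] by blast
  have a_symmetric: "a k (x \<circ> \<tau>) = a k x" if "\<tau> permutes {..<Suc n}" for k x \<tau>
    using gen_alg_invariant[OF a(1), of "\<lambda>x. x \<circ> \<tau>"] power_sum_permute[OF that]
    by (auto simp: power_sums_def)
  have f_eq_coord: "f x = (\<Sum>k\<le>E. a k x * x i ^ k)" if "i < Suc n" for x i
  proof -
    have \<tau>: "transpose i n permutes {..<Suc n}" using that by (intro permutes_swap_id) auto
    then have "f x = f (x \<circ> transpose i n)" using f(2) by (simp add: symmetric_on_def)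
    then show ?thesis using a(2) a_symmetric[OF \<tau>] by simp
  qed
  have "of_nat (Suc n) * f x = (\<Sum>k\<le>E. a k x * power_sum (Suc n) k x)" for x
  proof -
    have "of_nat (Suc n) * f x = (\<Sum>i<Suc n. f x)" by simp
    also have "\<dots> = (\<Sum>i<Suc n. \<Sum>k\<le>E. a k x * x i ^ k)"
      using f_eq_coord by (intro sum.cong) auto
    also have "\<dots> = (\<Sum>k\<le>E. a k x * power_sum (Suc n) k x)"
      unfolding power_sum_def by (subst sum.swap) (simp only: sum_distrib_left)
    finally show ?thesis .
  qed
  then have f_eq: "f = (\<lambda>x. (\<Sum>k\<le>E. a k x * power_sum (Suc n) k x) / of_nat (Suc n))"
    by (auto simp: field_simps simp del: of_nat_Suc)
  show ?thesis
    unfolding f_eq by (rule gen_alg_divide, rule gen_alg_sum, simp, rule gen_alg_mult, rule a(1), rule power_sum_in_gen_alg)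
qed

theorem symmetric_in_gen_alg_power_sums:
  "f \<in> gen_alg (coord_funs n) \<Longrightarrow> symmetric_on n f \<Longrightarrow> f \<in> gen_alg (power_sums n)"
proof (induction n arbitrary: f)
  case 0
  then show ?case by (auto intro: gen_alg_mono simp: coord_funs_def)
next
  case (Suc n)
  have "symmetric_on n f"
    using Suc.prems(2) permutes_subset[of _ "{..<n}" "{..<Suc n}"]
    by (auto simp: symmetric_on_def)
  with Suc show ?case
    by (intro symmetric_gen_alg_eliminate_last_coord symmetric_in_gen_alg_last_coord_power_sums) auto
qed

lemma sum_lessThan_add:
  fixes f :: "nat \<Rightarrow> 'a :: comm_monoid_add"
  shows "(\<Sum>i<a + b. f i) = (\<Sum>i<a. f i) + (\<Sum>i<b. f (a + i))"
  by (induction b) (simp_all add: add.assoc)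

lemma blk_Cons:
  assumes "i < a + sum_list lam"
  shows "blk (a # lam) i = (if i < a then 0 else Suc (blk lam (i - a)))"
proof (cases "i < a")
  case True
  then show ?thesis unfolding blk_def by (intro Least_equality) auto
next
  case False
  have "i < sum_list (take (Suc (length lam)) (a # lam))" using assms by simp
  then have "(LEAST j. i < sum_list (take (Suc j) (a # lam)))
      = Suc (LEAST m. i < sum_list (take (Suc (Suc m)) (a # lam)))"
    by (rule Least_Suc) (use False in simp)
  also have "(\<lambda>m. i < sum_list (take (Suc (Suc m)) (a # lam)))
      = (\<lambda>m. i - a < sum_list (take (Suc m) lam))"
    using False by (auto simp: fun_eq_iff)
  finally show ?thesis using False unfolding blk_def by simp
qed

lemma sum_blk:
  "(\<Sum>i<sum_list lam. g (blk lam i)) = (\<Sum>j<length lam. of_nat (lam ! j) * (g j :: complex))"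
proof (induction lam arbitrary: g)
  case Nil then show ?case by simp
next
  case (Cons a lam)
  have "(\<Sum>i<sum_list (a # lam). g (blk (a # lam) i))
      = (\<Sum>i<a. g (blk (a # lam) i)) + (\<Sum>i<sum_list lam. g (blk (a # lam) (a + i)))"
    by (simp add: sum_lessThan_add)
  also have "(\<Sum>i<a. g (blk (a # lam) i)) = of_nat a * g 0"
    by (simp add: blk_Cons)
  also have "(\<Sum>i<sum_list lam. g (blk (a # lam) (a + i))) = (\<Sum>i<sum_list lam. g (Suc (blk lam i)))"
    by (intro sum.cong) (auto simp: blk_Cons)
  also have "\<dots> = (\<Sum>j<length lam. of_nat (lam ! j) * g (Suc j))" by (rule Cons.IH)
  finally show ?case unfolding length_Cons sum.lessThan_Suc_shift by simp
qed

lemma power_sum_comp_emb: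
  "sum_list lam = n \<Longrightarrow> power_sum n k \<circ> emb lam = newton_lam lam k"
  using sum_blk[of "\<lambda>j. _ j ^ k" lam] by (auto simp: power_sum_def emb_def newton_lam_def)

lemma emb_in_E_lam: "sum_list lam = n \<Longrightarrow> emb lam y \<in> E_lam n lam"
  unfolding E_lam_def emb_def by auto

lemma E_lam_subset_X_lam: "E_lam n lam \<subseteq> X_lam n lam"
  unfolding X_lam_def by (auto intro!: exI[of _ id])

lemma E_lam_subset_range_emb:
  assumes "sum_list lam = n"
  shows "E_lam n lam \<subseteq> range (emb lam)"
proof
  fix x assume x: "x \<in> E_lam n lam"
  define y where "y j = x (SOME i. i < n \<and> blk lam i = j)" for j
  have "x i = emb lam y i" for i
  proof (cases "i < n")
    case True
    then have "\<exists>i'. i' < n \<and> blk lam i' = blk lam i" by blast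
    from someI_ex[OF this] have "x (SOME i'. i' < n \<and> blk lam i' = blk lam i) = x i"
      using x True unfolding E_lam_def by blast
    then show ?thesis using True assms unfolding emb_def y_def by simp
  next
    case False then show ?thesis using x assms unfolding emb_def E_lam_def by auto
  qed
  then show "x \<in> range (emb lam)" by blast
qed

lemma Sn_invariant_on_X_lam_eqI:
  assumes "sum_list lam = n"
    and "Sn_invariant_on n (X_lam n lam) f" "Sn_invariant_on n (X_lam n lam) g"
    and "f \<circ> emb lam = g \<circ> emb lam" and "x \<in> X_lam n lam"
  shows "f x = g x"
proof -
  obtain y \<sigma> where y: "x = y \<circ> \<sigma>" "y \<in> E_lam n lam" "\<sigma> permutes {..<n}"
    using assms(5) unfolding X_lam_def by blast
  obtain z where z: "y = emb lam z" using E_lam_subset_range_emb[OF assms(1)] y(2) by blast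
  have "y \<in> X_lam n lam" using y(2) E_lam_subset_X_lam by blast
  then have "f x = f y" "g x = g y" using assms(2,3) y(1,3) by (auto simp: Sn_invariant_on_def)
  moreover have "f y = g y" using fun_cong[OF assms(4), of z] z by simp
  ultimately show ?thesis by simp
qed

lemma pullback_in_newton_alg:
  assumes "sum_list lam = n" "f \<in> poly_fun n" "Sn_invariant_on n (X_lam n lam) f"
  shows "f \<circ> emb lam \<in> newton_alg lam"
proof -
  have "symmetrize n f \<in> gen_alg (power_sums n)"
    using assms(2) by (intro symmetric_in_gen_alg_power_sums symmetrize_in_gen_alg
        symmetric_on_symmetrize) (simp add: poly_fun_eq_gen_alg_coord_funs)
  then have "(\<lambda>y. symmetrize n f (emb lam y)) \<in> gen_alg (newton_lam lam ` {1..})"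
  proof (rule gen_alg_comp)
    fix g assume "g \<in> power_sums n"
    then obtain k where "g = power_sum n k" "1 \<le> k" unfolding power_sums_def by blast
    then show "(\<lambda>y. g (emb lam y)) \<in> gen_alg (newton_lam lam ` {1..})"
      using power_sum_comp_emb[OF assms(1), of k] by (auto simp: comp_def intro!: gen_alg_gen)
  qed
  moreover have "symmetrize n f (emb lam y) = f (emb lam y)" for y
  proof -
    have "emb lam y \<in> X_lam n lam" using emb_in_E_lam[OF assms(1)] E_lam_subset_X_lam by blast
    with assms(3) show ?thesis by (intro symmetrize_eq) (simp add: Sn_invariant_on_def)
  qed
  ultimately have "f \<circ> emb lam \<in> gen_alg (newton_lam lam ` {1..})" by (simp add: comp_def)
  then show ?thesis by induction (auto intro: newton_alg.intros)
qed

lemma newton_alg_subset_pullbacks: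
  assumes "sum_list lam = n" "h \<in> newton_alg lam"
  shows "h \<in> {f \<circ> emb lam | f. f \<in> poly_fun n \<and> Sn_invariant_on n (X_lam n lam) f}"
  using assms(2)
proof induction
  case (na_const c)
  show ?case by (auto simp: Sn_invariant_on_def intro!: exI[of _ "\<lambda>x. c"] pf_const)
next
  case (na_gen i)
  have "newton_lam lam i = power_sum n i \<circ> emb lam" using power_sum_comp_emb[OF assms(1)] by simp
  then show ?case
    using power_sum_in_coord_funs power_sum_permute
    by (auto simp: Sn_invariant_on_def poly_fun_eq_gen_alg_coord_funs intro!: exI[of _ "power_sum n i"])
next
  case (na_add f g)
  then obtain f' g' where "f = f' \<circ> emb lam" "f' \<in> poly_fun n" "Sn_invariant_on n (X_lam n lam) f'"
    "g = g' \<circ> emb lam" "g' \<in> poly_fun n" "Sn_invariant_on n (X_lam n lam) g'" by blast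
  then show ?case
    by (intro CollectI exI[of _ "\<lambda>x. f' x + g' x"]) (auto simp: Sn_invariant_on_def intro: pf_add)
next
  case (na_mult f g)
  then obtain f' g' where "f = f' \<circ> emb lam" "f' \<in> poly_fun n" "Sn_invariant_on n (X_lam n lam) f'"
    "g = g' \<circ> emb lam" "g' \<in> poly_fun n" "Sn_invariant_on n (X_lam n lam) g'" by blast
  then show ?case
    by (intro CollectI exI[of _ "\<lambda>x. f' x * g' x"]) (auto simp: Sn_invariant_on_def intro: pf_mult)
qed

theorem proposition2p2:
  fixes n :: nat and lam :: "nat list"
  assumes "is_partition lam n"
  shows "(\<forall>f g. f \<in> poly_fun n \<longrightarrow> g \<in> poly_fun n \<longrightarrow>
            Sn_invariant_on n (X_lam n lam) f \<longrightarrow> Sn_invariant_on n (X_lam n lam) g \<longrightarrow>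
            f \<circ> emb lam = g \<circ> emb lam \<longrightarrow> (\<forall>x\<in>X_lam n lam. f x = g x))
       \<and> {f \<circ> emb lam | f. f \<in> poly_fun n \<and> Sn_invariant_on n (X_lam n lam) f}
           = newton_alg lam"
proof -
  have n: "sum_list lam = n" using assms unfolding is_partition_def by simp
  show ?thesis
    using Sn_invariant_on_X_lam_eqI[OF n] pullback_in_newton_alg[OF n]
      newton_alg_subset_pullbacks[OF n]
    by blast
qed

end
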